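(* Let $A\in\mathbb{C}^{n\times n}$, $C\in\mathbb{C}^{1\times n}$, $s=\{s_1,\dots,s_j\}\subset\mathbb{C}\setminus\Lambda(A^* )$, and let $\mathcal{K}_j(A^*,C^*,s)$ be $A^*$-variant with basis $Z_j$ such that $A^*Z_j=C^*h_j+Z_jH_{-j}$ with $h_j\in\mathbb{C}^{1\times j}$, $H_{-j}\in\mathbb{C}^{j\times j}$ and $\Lambda(H_{-j})=s$. Then the pair $(h_j,H_{-j})$ is observable, i.e. there is no nonzero $u\in\mathbb{C}^j$ with $h_ju=0$ and $H_{-j}u=\mu u$ for some $\mu\in\mathbb{C}$. Consequently, for every $B\in\mathbb{C}^{n\times m}$ the pair $\big(H_{-j}^*,\begin{bmatrix}h_j^*&Z_j^*B\end{bmatrix}\big)$ is controllable.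
   Context: For $M\in\mathbb{C}^{n\times n}$, $b\in\mathbb{C}^n$ and a multiset $s=\{s_1,\dots,s_j\}\subset(\mathbb{C}\cup\{\infty\})\setminus\Lambda(M)$, with $q(x)=\prod_{i:\,s_i\ne\infty}(x-s_i)$, the rational Krylov subspace is $\mathcal{K}_j(M,b,s)=\{q(M)^{-1}p(M)b:p\in\Pi_{j-1}\}$. A subspace $\mathcal{V}$ is $M$-variant if $M\mathcal{V}\not\subseteq\mathcal{V}$. The matrix $\begin{bmatrix}C^*&Z_j\end{bmatrix}$ has full column rank. A pair $(F,G)$ with $F\in\mathbb{C}^{j\times j}$ is controllable if $\operatorname{rank}\begin{bmatrix}G&FG&\cdots&F^{j-1}G\end{bmatrix}=j$. *)

theory Defs
  imports "Jordan_Normal_Form.DL_Rank" "Jordan_Normal_Form.Schur_Decomposition"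
    "Jordan_Normal_Form.Char_Poly" "HOL-Library.Multiset"
begin

definition poly_mat :: "'a :: comm_ring_1 poly \<Rightarrow> 'a mat \<Rightarrow> 'a mat" where
  "poly_mat p M = foldr (\<lambda>c N. c \<cdot>\<^sub>m 1\<^sub>m (dim_row M) + M * N) (coeffs p) (0\<^sub>m (dim_row M) (dim_row M))"

text \<open>Inverse of a square matrix (meaningful when it is invertible).\<close>
definition inv_mat :: "'a :: comm_ring_1 mat \<Rightarrow> 'a mat" where
  "inv_mat M = (SOME N. N \<in> carrier_mat (dim_row M) (dim_row M) \<and>
                        M * N = 1\<^sub>m (dim_row M) \<and> N * M = 1\<^sub>m (dim_row M))"

definition nodal_poly :: "'a :: comm_ring_1 multiset \<Rightarrow> 'a poly" where
  "nodal_poly s = (\<Prod>x\<in>#s. [:-x, 1:])"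

text \<open>Rational Krylov subspace K_j(M,b,s) = { q(M)^{-1} p(M) b : p in Pi_{j-1} },
  j = size s, all poles finite.  Pi_{j-1} = polynomials of degree at most j-1
  (for j = 0 this is just the zero polynomial).\<close>
definition rat_krylov :: "'a :: field mat \<Rightarrow> 'a vec \<Rightarrow> 'a multiset \<Rightarrow> 'a vec set" where
  "rat_krylov M b s = {inv_mat (poly_mat (nodal_poly s) M) *\<^sub>v (poly_mat p M *\<^sub>v b) | p.
                        p = 0 \<or> degree p < size s}"

definition variant :: "'a :: semiring_1 mat \<Rightarrow> 'a vec set \<Rightarrow> bool" where
  "variant M V \<longleftrightarrow> \<not> ((\<lambda>v. M *\<^sub>v v) ` V \<subseteq> V)"

definition hcat :: "'a :: zero mat \<Rightarrow> 'a mat \<Rightarrow> 'a mat" where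
  "hcat X Y = mat (dim_row X) (dim_col X + dim_col Y)
     (\<lambda>(i, k). if k < dim_col X then X $$ (i, k) else Y $$ (i, k - dim_col X))"

text \<open>Controllability matrix [G, F G, ..., F^(j-1) G] for F of size j x j.\<close>
definition ctrb_mat :: "'a :: semiring_1 mat \<Rightarrow> 'a mat \<Rightarrow> 'a mat" where
  "ctrb_mat F G = mat (dim_row F) (dim_row F * dim_col G)
     (\<lambda>(i, k). ((F ^\<^sub>m (k div dim_col G)) * G) $$ (i, k mod dim_col G))"

definition controllable :: "'a :: field mat \<Rightarrow> 'a mat \<Rightarrow> bool" where
  "controllable F G \<longleftrightarrow> vec_space.rank (dim_row F) (ctrb_mat F G) = dim_row F"

end

theory Submission
  imports Defs
begin

text \<open>An eigenvector u of H with h u = 0 would make Z u an eigenvector of A^* for the same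
  eigenvalue, by the relation A^* Z = C^* h + Z H; but the eigenvalues of H are the poles, which
  are not eigenvalues of A^*. Controllability is the Hautus test for the adjoint pair: if the
  rows h H^k (k < j) were dependent, some u \<noteq> 0 would satisfy h H^k u = 0 for all k < j.
  Splitting off a linear factor of an annihilating polynomial of u yields an eigenvector q(H) u
  with deg q < j, which h also annihilates. So the observability matrix is nonsingular, and its
  adjoint consists of the columns (H^*)^k h^* of the controllability matrix.\<close>

lemma smult_mat_mult_vec:
  assumes "A \<in> carrier_mat m n" and "v \<in> carrier_vec n"
  shows "(k \<cdot>\<^sub>m A) *\<^sub>v v = k \<cdot>\<^sub>v (A *\<^sub>v v)"
  using assms by (intro eq_vecI) (auto simp: smult_scalar_prod_distrib[of _ n])

lemma poly_mat_0 [simp]: "poly_mat 0 M = 0\<^sub>m (dim_row M) (dim_row M)"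
  by (simp add: poly_mat_def)

lemma poly_mat_pCons:
  assumes "M \<in> carrier_mat n n"
  shows "poly_mat (pCons a p) M = a \<cdot>\<^sub>m 1\<^sub>m n + M * poly_mat p M"
proof (cases "p = 0 \<and> a = 0")
  case True
  then show ?thesis using assms by (auto simp: poly_mat_def)
next
  case False
  then have "coeffs (pCons a p) = a # coeffs p" by (auto simp: cCons_def)
  then show ?thesis using assms by (simp add: poly_mat_def)
qed

lemma dim_poly_mat [simp]:
  "dim_row (poly_mat p M) = dim_row M" "dim_col (poly_mat p M) = dim_row M"
proof -
  have "dim_row (foldr (\<lambda>c N. c \<cdot>\<^sub>m 1\<^sub>m (dim_row M) + M * N) cs (0\<^sub>m (dim_row M) (dim_row M))) = dim_row M \<and>
        dim_col (foldr (\<lambda>c N. c \<cdot>\<^sub>m 1\<^sub>m (dim_row M) + M * N) cs (0\<^sub>m (dim_row M) (dim_row M))) = dim_row M" for cs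
    by (induction cs) simp_all
  then show "dim_row (poly_mat p M) = dim_row M" "dim_col (poly_mat p M) = dim_row M"
    unfolding poly_mat_def by blast+
qed

lemma poly_mat_carrier [simp]: "M \<in> carrier_mat n n \<Longrightarrow> poly_mat p M \<in> carrier_mat n n"
  by (intro carrier_matI) simp_all

lemma poly_mat_add:
  assumes M: "M \<in> carrier_mat n n"
  shows "poly_mat (p + q) M = poly_mat p M + poly_mat q M"
proof (induction p arbitrary: q rule: pCons_induct)
  case 0
  then show ?case using M by simp
next
  case (pCons a p)
  obtain b q' where q: "q = pCons b q'" by (cases q)
  show ?case
    unfolding q add_pCons poly_mat_pCons[OF M] pCons.IH
    using M by (subst mult_add_distrib_mat[of M n n _ n]) (auto simp: algebra_simps)
qed

lemma poly_mat_smult: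
  assumes M: "M \<in> carrier_mat n n"
  shows "poly_mat (smult c p) M = c \<cdot>\<^sub>m poly_mat p M"
proof (induction p rule: pCons_induct)
  case 0
  then show ?case using M by auto
next
  case (pCons a p)
  then show ?case
    unfolding smult_pCons poly_mat_pCons[OF M] pCons.IH
    using M by (subst mult_smult_distrib[of M n n _ n]) (auto simp: algebra_simps)
qed

lemma poly_mat_linear_factor:
  assumes M: "M \<in> carrier_mat n n"
  shows "poly_mat ([:-z, 1:] * q) M = M * poly_mat q M - z \<cdot>\<^sub>m poly_mat q M"
proof -
  have factor: "[:-z, 1:] * q = smult (-z) q + pCons 0 q" by simp
  show ?thesis
    unfolding factor poly_mat_add[OF M] poly_mat_smult[OF M] poly_mat_pCons[OF M]
    using M by (auto simp: algebra_simps)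
qed

lemma poly_mat_commute:
  assumes M: "M \<in> carrier_mat n n"
  shows "M * poly_mat p M = poly_mat p M * M"
proof (induction p rule: pCons_induct)
  case 0
  then show ?case using M by simp
next
  case (pCons a p)
  have "M * poly_mat (pCons a p) M = a \<cdot>\<^sub>m M + M * (M * poly_mat p M)"
    unfolding poly_mat_pCons[OF M] using M
    by (subst mult_add_distrib_mat[of M n n _ n]) (auto simp: mult_smult_distrib[of M n n _ n])
  also have "M * (M * poly_mat p M) = M * poly_mat p M * M"
    using M by (simp add: assoc_mult_mat[of M n n _ n _ n] flip: pCons.IH)
  also have "a \<cdot>\<^sub>m M + M * poly_mat p M * M = poly_mat (pCons a p) M * M"
    unfolding poly_mat_pCons[OF M] using M
    by (subst add_mult_distrib_mat[of _ n n _ _ n]) auto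
  finally show ?case .
qed

lemma poly_mat_pCons_mult_vec:
  assumes M: "M \<in> carrier_mat n n" and u: "u \<in> carrier_vec n"
  shows "poly_mat (pCons a p) M *\<^sub>v u = a \<cdot>\<^sub>v u + poly_mat p M *\<^sub>v (M *\<^sub>v u)"
proof -
  have "poly_mat (pCons a p) M *\<^sub>v u = (a \<cdot>\<^sub>m 1\<^sub>m n + poly_mat p M * M) *\<^sub>v u"
    using poly_mat_pCons[OF M] poly_mat_commute[OF M] by simp
  also have "\<dots> = (a \<cdot>\<^sub>m 1\<^sub>m n) *\<^sub>v u + (poly_mat p M * M) *\<^sub>v u"
    using M u by (intro add_mult_distrib_mat_vec[of _ n n]) auto
  also have "(a \<cdot>\<^sub>m 1\<^sub>m n) *\<^sub>v u = a \<cdot>\<^sub>v u"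
    using u by (intro eq_vecI) auto
  also have "(poly_mat p M * M) *\<^sub>v u = poly_mat p M *\<^sub>v (M *\<^sub>v u)"
    using M u by (intro assoc_mult_mat_vec[of _ n n _ n]) auto
  finally show ?thesis .
qed

lemma poly_mat_mult_vec_index:
  assumes M: "M \<in> carrier_mat n n" and i: "i < n"
  shows "u \<in> carrier_vec n \<Longrightarrow> \<forall>k\<ge>N. coeff p k = 0 \<Longrightarrow>
    (poly_mat p M *\<^sub>v u) $ i = (\<Sum>k<N. coeff p k * (M ^\<^sub>m k *\<^sub>v u) $ i)"
proof (induction p arbitrary: u N rule: pCons_induct)
  case 0
  then show ?case using M i by simp
next
  case (pCons a p)
  have Mu: "M *\<^sub>v u \<in> carrier_vec n" using M pCons.prems by simp
  have "N \<noteq> 0"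
  proof
    assume "N = 0"
    then have "pCons a p = 0" using pCons.prems(2) by (intro poly_eqI) simp
    with pCons.hyps show False by simp
  qed
  then obtain N' where N: "N = Suc N'" using not0_implies_Suc by blast
  have "\<forall>k\<ge>N'. coeff p k = 0" using pCons.prems(2) N by (metis Suc_le_mono coeff_pCons_Suc)
  then have "(poly_mat (pCons a p) M *\<^sub>v u) $ i
      = a * u $ i + (\<Sum>k<N'. coeff p k * (M ^\<^sub>m k *\<^sub>v (M *\<^sub>v u)) $ i)"
    using pCons.IH[OF Mu] M i pCons.prems(1) by (simp add: poly_mat_pCons_mult_vec)
  also have "\<dots> = (\<Sum>k<N. coeff (pCons a p) k * (M ^\<^sub>m k *\<^sub>v u) $ i)"
    unfolding N sum.lessThan_Suc_shift using M i pCons.prems(1)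
    by (simp add: assoc_mult_mat_vec[of _ n n _ n])
  finally show ?case .
qed

lemma krylov_annihilator:
  fixes M :: "'a :: field mat"
  assumes M: "M \<in> carrier_mat n n" and u: "u \<in> carrier_vec n"
  shows "\<exists>p. p \<noteq> 0 \<and> degree p \<le> n \<and> poly_mat p M *\<^sub>v u = 0\<^sub>v n"
proof -
  \<comment> \<open>the n + 1 Krylov vectors, padded by a zero row to a singular square matrix\<close>
  define K where "K = mat\<^sub>r (Suc n) (Suc n)
    (\<lambda>i. if i = n then 0\<^sub>v (Suc n) else vec (Suc n) (\<lambda>k. (M ^\<^sub>m k *\<^sub>v u) $ i))"
  have K: "K \<in> carrier_mat (Suc n) (Suc n)" unfolding K_def by auto
  have "det K = 0" unfolding K_def by (rule det_row_0) auto
  then obtain c where c: "c \<in> carrier_vec (Suc n)" "c \<noteq> 0\<^sub>v (Suc n)" "K *\<^sub>v c = 0\<^sub>v (Suc n)"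
    using det_0_iff_vec_prod_zero_field[OF K] by blast
  define p where "p = (\<Sum>k<Suc n. monom (c $ k) k)"
  have coeff_p: "coeff p k = (if k < Suc n then c $ k else 0)" for k
    unfolding p_def coeff_sum coeff_monom by (auto simp: if_distrib cong: if_cong)
  have "p \<noteq> 0"
  proof
    assume "p = 0"
    then have "c $ k = 0" if "k < Suc n" for k using coeff_p[of k] that by simp
    then have "c = 0\<^sub>v (Suc n)" using c(1) by (intro eq_vecI) auto
    with c(2) show False by simp
  qed
  moreover have "degree p \<le> n" using coeff_p by (intro degree_le) auto
  moreover have "poly_mat p M *\<^sub>v u = 0\<^sub>v n"
  proof (intro eq_vecI)
    fix i assume "i < dim_vec (0\<^sub>v n :: 'a vec)"
    then have i: "i < n" by simp
    have "(poly_mat p M *\<^sub>v u) $ i = (\<Sum>k<Suc n. coeff p k * (M ^\<^sub>m k *\<^sub>v u) $ i)"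
      by (rule poly_mat_mult_vec_index[OF M i u]) (simp add: coeff_p)
    also have "\<dots> = (K *\<^sub>v c) $ i"
      using i c(1) unfolding K_def by (simp add: coeff_p scalar_prod_def atLeast0LessThan mult.commute)
    also have "\<dots> = 0" using c(3) i by simp
    finally show "(poly_mat p M *\<^sub>v u) $ i = 0\<^sub>v n $ i" using i by simp
  qed (use M in simp)
  ultimately show ?thesis by blast
qed

lemma poly_mat_mult_vec_in_kernel:
  assumes M: "M \<in> carrier_mat n n" and L: "L \<in> carrier_mat r n" and u: "u \<in> carrier_vec n"
    and kernel: "\<forall>k<N. L *\<^sub>v (M ^\<^sub>m k *\<^sub>v u) = 0\<^sub>v r" and deg: "degree p < N"
  shows "L *\<^sub>v (poly_mat p M *\<^sub>v u) = 0\<^sub>v r"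
proof (intro eq_vecI)
  fix i assume "i < dim_vec (0\<^sub>v r :: 'a vec)"
  then have i: "i < r" by simp
  have coeff: "\<forall>k\<ge>N. coeff p k = 0" using deg by (simp add: coeff_eq_0)
  have "(L *\<^sub>v (poly_mat p M *\<^sub>v u)) $ i = (\<Sum>l<n. L $$ (i, l) * (poly_mat p M *\<^sub>v u) $ l)"
    using L M i u by (simp add: scalar_prod_def atLeast0LessThan)
  also have "\<dots> = (\<Sum>l<n. L $$ (i, l) * (\<Sum>k<N. coeff p k * (M ^\<^sub>m k *\<^sub>v u) $ l))"
    by (intro sum.cong) (simp_all add: poly_mat_mult_vec_index[OF M _ u coeff])
  also have "\<dots> = (\<Sum>k<N. coeff p k * (L *\<^sub>v (M ^\<^sub>m k *\<^sub>v u)) $ i)"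
    using L M i u by (simp add: scalar_prod_def atLeast0LessThan sum_distrib_left ac_simps sum.swap[of _ "{..<N}"])
  also have "\<dots> = 0" using kernel i by simp
  finally show "(L *\<^sub>v (poly_mat p M *\<^sub>v u)) $ i = 0\<^sub>v r $ i" using i by simp
qed (use L in simp)

lemma krylov_eigenvector:
  fixes M :: "complex mat"
  assumes M: "M \<in> carrier_mat n n" and u: "u \<in> carrier_vec n" and u0: "u \<noteq> 0\<^sub>v n"
  shows "p \<noteq> 0 \<Longrightarrow> poly_mat p M *\<^sub>v u = 0\<^sub>v n \<Longrightarrow> \<exists>q \<mu>. degree q < degree p \<and>
    poly_mat q M *\<^sub>v u \<noteq> 0\<^sub>v n \<and> M *\<^sub>v (poly_mat q M *\<^sub>v u) = \<mu> \<cdot>\<^sub>v (poly_mat q M *\<^sub>v u)"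
proof (induction "degree p" arbitrary: p rule: less_induct)
  case less
  show ?case
  proof (cases "degree p = 0")
    case True
    then obtain c where p: "p = [:c:]" and "c \<noteq> 0" using less.prems(1) by (metis degree_0_id pCons_0_0)
    have "c * u $ i = 0" if "i < n" for i
      using arg_cong[OF less.prems(2), of "\<lambda>v. v $ i"] M u that
      unfolding p by (simp add: poly_mat_pCons_mult_vec)
    with \<open>c \<noteq> 0\<close> u have "u = 0\<^sub>v n" by (intro eq_vecI) auto
    with u0 show ?thesis by simp
  next
    case False
    then obtain z where "poly p z = 0"
      using fundamental_theorem_of_algebra[of p] by (auto simp: constant_degree)
    then obtain q where p: "p = [:-z, 1:] * q" using poly_eq_0_iff_dvd by blast
    with less.prems(1) have "q \<noteq> 0" by auto
    then have deg: "degree q < degree p" unfolding p by (subst degree_mult_eq) auto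
    define w where "w = poly_mat q M *\<^sub>v u"
    have w: "w \<in> carrier_vec n" unfolding w_def by (rule mult_mat_vec_carrier[OF poly_mat_carrier[OF M] u])
    have "M *\<^sub>v w - z \<cdot>\<^sub>v w = poly_mat p M *\<^sub>v u"
      unfolding p poly_mat_linear_factor[OF M] w_def using M u
      by (simp add: minus_mult_distrib_mat_vec[of _ n n] assoc_mult_mat_vec[of _ n n _ n]
          smult_mat_mult_vec[of _ n n])
    then have eigen: "M *\<^sub>v w = z \<cdot>\<^sub>v w"
      using less.prems(2) M w by (intro eq_vecI) (auto simp: vec_eq_iff)
    show ?thesis
    proof (cases "w = 0\<^sub>v n")
      case False
      with eigen deg show ?thesis unfolding w_def by blast
    next
      case True
      with less.hyps[OF deg \<open>q \<noteq> 0\<close>] deg show ?thesis unfolding w_def by (meson order.strict_trans)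
    qed
  qed
qed

lemma dim_mat_adjoint [simp]:
  "dim_row (mat_adjoint A) = dim_col A" "dim_col (mat_adjoint A) = dim_row A"
  unfolding mat_adjoint_def by simp_all

lemma mat_adjoint_carrier [simp]: "A \<in> carrier_mat m n \<Longrightarrow> mat_adjoint A \<in> carrier_mat n m"
  by (intro carrier_matI) simp_all

lemma index_mat_adjoint [simp]:
  "i < dim_col A \<Longrightarrow> k < dim_row A \<Longrightarrow> mat_adjoint A $$ (i, k) = conjugate (A $$ (k, i))"
  unfolding mat_adjoint_def by (simp add: mat_of_rows_def)

lemma conjugate_one [simp]: "conjugate (1 :: 'a :: conjugatable_field) = 1"
proof -
  have "conjugate 1 * conjugate 1 = (conjugate 1 :: 'a)"
    by (metis conjugate_dist_mul mult_1)
  moreover have "conjugate 1 \<noteq> (0 :: 'a)" by simp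
  ultimately show ?thesis by (metis mult_cancel_right2)
qed

lemma mat_adjoint_one [simp]: "mat_adjoint (1\<^sub>m n :: 'a :: conjugatable_field mat) = 1\<^sub>m n"
  by (intro eq_matI) auto

lemma mat_adjoint_mult:
  fixes A B :: "'a :: conjugatable_field mat"
  assumes "A \<in> carrier_mat m n" and "B \<in> carrier_mat n k"
  shows "mat_adjoint (A * B) = mat_adjoint B * mat_adjoint A"
  using assms by (intro eq_matI)
    (auto simp: scalar_prod_def sum_conjugate conjugate_dist_mul mult.commute intro!: sum.cong)

lemma pow_mat_Suc_left:
  assumes A: "A \<in> carrier_mat n n"
  shows "A ^\<^sub>m Suc k = A * A ^\<^sub>m k"
proof (induction k)
  case 0
  then show ?case using A by simp
next
  case (Suc k)
  have "A ^\<^sub>m Suc (Suc k) = A * A ^\<^sub>m k * A" using Suc.IH by simp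
  also have "\<dots> = A * A ^\<^sub>m Suc k" using A by (simp add: assoc_mult_mat[of _ n n _ n _ n])
  finally show ?case .
qed

lemma mat_adjoint_pow:
  fixes A :: "'a :: conjugatable_field mat"
  assumes A: "A \<in> carrier_mat n n"
  shows "mat_adjoint (A ^\<^sub>m k) = mat_adjoint A ^\<^sub>m k"
proof (induction k)
  case 0
  then show ?case using A by simp
next
  case (Suc k)
  have "mat_adjoint (A ^\<^sub>m Suc k) = mat_adjoint A * mat_adjoint A ^\<^sub>m k"
    using A by (simp add: mat_adjoint_mult[of _ n n _ n] Suc.IH)
  then show ?case using A pow_mat_Suc_left[of "mat_adjoint A" n k] by simp
qed

lemma det_mat_adjoint:
  fixes A :: "complex mat"
  assumes "A \<in> carrier_mat n n"
  shows "det (mat_adjoint A) = cnj (det A)"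
proof -
  interpret cnj: comm_ring_hom cnj by unfold_locales auto
  have "mat_adjoint A = map_mat cnj (transpose_mat A)"
    using assms by (intro eq_matI) auto
  then show ?thesis using assms by (simp add: det_transpose)
qed

definition observable :: "'a :: field mat \<Rightarrow> 'a mat \<Rightarrow> bool" where
  "observable h H \<longleftrightarrow> (\<forall>u \<mu>. u \<in> carrier_vec (dim_col H) \<longrightarrow> H *\<^sub>v u = \<mu> \<cdot>\<^sub>v u \<longrightarrow>
     h *\<^sub>v u = 0\<^sub>v (dim_row h) \<longrightarrow> u = 0\<^sub>v (dim_col H))"

lemma krylov_kernel_trivial_if_observable:
  fixes H h :: "complex mat"
  assumes H: "H \<in> carrier_mat j j" and h: "h \<in> carrier_mat r j" and obs: "observable h H"
    and u: "u \<in> carrier_vec j" and kernel: "\<forall>k<j. h *\<^sub>v (H ^\<^sub>m k *\<^sub>v u) = 0\<^sub>v r"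
  shows "u = 0\<^sub>v j"
proof (rule ccontr)
  assume "u \<noteq> 0\<^sub>v j"
  obtain p where p: "p \<noteq> 0" "degree p \<le> j" "poly_mat p H *\<^sub>v u = 0\<^sub>v j"
    using krylov_annihilator[OF H u] by blast
  then obtain q \<mu> where q: "degree q < degree p" "poly_mat q H *\<^sub>v u \<noteq> 0\<^sub>v j"
    "H *\<^sub>v (poly_mat q H *\<^sub>v u) = \<mu> \<cdot>\<^sub>v (poly_mat q H *\<^sub>v u)"
    using krylov_eigenvector[OF H u \<open>u \<noteq> 0\<^sub>v j\<close>] by blast
  have "degree q < j" using q(1) p(2) by linarith
  then have "h *\<^sub>v (poly_mat q H *\<^sub>v u) = 0\<^sub>v r"
    by (rule poly_mat_mult_vec_in_kernel[OF H h u kernel])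
  moreover have "poly_mat q H *\<^sub>v u \<in> carrier_vec j"
    by (rule mult_mat_vec_carrier[OF poly_mat_carrier[OF H] u])
  ultimately show False using q(2,3) obs H h unfolding observable_def by (metis carrier_matD)
qed

lemma observable_of_krylov_relation:
  fixes M :: "'a :: field mat"
  assumes M: "M \<in> carrier_mat n n" and Z: "Z \<in> carrier_mat n j" and C: "C \<in> carrier_mat n r"
    and h: "h \<in> carrier_mat r j" and H: "H \<in> carrier_mat j j"
    and Z_inj: "\<forall>y \<in> carrier_vec j. Z *\<^sub>v y = 0\<^sub>v n \<longrightarrow> y = 0\<^sub>v j"
    and rel: "M * Z = C * h + Z * H"
    and disjoint: "\<forall>\<mu>. eigenvalue H \<mu> \<longrightarrow> \<not> eigenvalue M \<mu>"
  shows "observable h H"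
  unfolding observable_def
proof (intro allI impI)
  fix u \<mu> assume u: "u \<in> carrier_vec (dim_col H)" and Hu: "H *\<^sub>v u = \<mu> \<cdot>\<^sub>v u"
    and hu: "h *\<^sub>v u = 0\<^sub>v (dim_row h)"
  show "u = 0\<^sub>v (dim_col H)"
  proof (rule ccontr)
    assume "u \<noteq> 0\<^sub>v (dim_col H)"
    then have "eigenvalue H \<mu>" using u Hu H unfolding eigenvalue_def eigenvector_def by auto
    have "M *\<^sub>v (Z *\<^sub>v u) = C *\<^sub>v (h *\<^sub>v u) + Z *\<^sub>v (H *\<^sub>v u)"
      using M Z C h H u
      by (simp add: assoc_mult_mat_vec[of _ n n _ j, symmetric] rel add_mult_distrib_mat_vec[of _ n j]
          assoc_mult_mat_vec[of _ n r _ j] assoc_mult_mat_vec[of _ n j _ j])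
    also have "\<dots> = \<mu> \<cdot>\<^sub>v (Z *\<^sub>v u)"
      using Hu hu C Z h H u by (simp add: mult_mat_vec) (intro eq_vecI; simp)
    finally have "M *\<^sub>v (Z *\<^sub>v u) = \<mu> \<cdot>\<^sub>v (Z *\<^sub>v u)" .
    moreover have "Z *\<^sub>v u \<in> carrier_vec n" using Z H u by (metis carrier_matD(2) mult_mat_vec_carrier)
    moreover have "Z *\<^sub>v u \<noteq> 0\<^sub>v n" using Z_inj \<open>u \<noteq> 0\<^sub>v (dim_col H)\<close> H u by (metis carrier_matD(2))
    ultimately have "eigenvalue M \<mu>" using M unfolding eigenvalue_def eigenvector_def by auto
    with disjoint \<open>eigenvalue H \<mu>\<close> show False by blast
  qed
qed

lemma col_ctrb_mat:
  assumes F: "F \<in> carrier_mat j j" and G: "G \<in> carrier_mat j c" and "0 < c" and "k < j"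
  shows "col (ctrb_mat F G) (k * c) = F ^\<^sub>m k *\<^sub>v col G 0"
proof -
  have "k * c < j * c" using assms by simp
  then show ?thesis using assms by (intro eq_vecI) (auto simp: ctrb_mat_def)
qed

lemma col_hcat_0: "0 < dim_col X \<Longrightarrow> col (hcat X Y) 0 = col X 0"
  by (intro eq_vecI) (auto simp: hcat_def)

lemma (in vec_space) rank_le_nr:
  assumes "A \<in> carrier_mat n nc"
  shows "rank A \<le> n"
proof -
  obtain S where S: "maximal S (\<lambda>T. T \<subseteq> set (cols A) \<and> lin_indpt T)"
    using maximal_exists[of "(\<lambda>T. T \<subseteq> set (cols A) \<and> lin_indpt T)" "card (set (cols A))" "{}"]
    by (meson List.finite_set card_mono empty_iff empty_subsetI finite_lin_indpt2 rev_finite_subset)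
  then have r: "rank A = card S" using rank_card_indpt[OF assms] by blast
  from S have "S \<subseteq> set (cols A)" "lin_indpt S" unfolding maximal_def by auto
  moreover have "set (cols A) \<subseteq> carrier_vec n" using assms cols_dim by blast
  ultimately have "card S \<le> dim" using li_le_dim(2)[OF fin_dim] by auto
  then show ?thesis using r dim_is_n by simp
qed

lemma (in vec_space) rank_eq_if_nonsingular_cols:
  assumes A: "A \<in> carrier_mat n nc" and Q: "Q \<in> carrier_mat n n" and "det Q \<noteq> 0"
    and cols: "set (cols Q) \<subseteq> set (cols A)"
  shows "rank A = n"
proof -
  have "distinct (cols Q)"
    using non_distinct_low_rank[OF Q] det_rank_iff[OF Q] \<open>det Q \<noteq> 0\<close> by auto
  then have "lin_indpt (set (cols Q))"
    using full_rank_lin_indpt[OF Q] det_rank_iff[OF Q] \<open>det Q \<noteq> 0\<close> by auto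
  then have "card (set (cols Q)) \<le> rank A" by (rule rank_ge_card_indpt[OF A cols])
  moreover have "card (set (cols Q)) = n" using \<open>distinct (cols Q)\<close> Q by (simp add: distinct_card)
  ultimately show ?thesis using rank_le_nr[OF A] by simp
qed

definition observability_mat :: "'a :: semiring_1 mat \<Rightarrow> 'a mat \<Rightarrow> 'a mat" where
  "observability_mat h H = mat (dim_row H) (dim_row H) (\<lambda>(k, i). (h * H ^\<^sub>m k) $$ (0, i))"

lemma det_observability_mat_nonzero:
  fixes H h :: "complex mat"
  assumes H: "H \<in> carrier_mat j j" and h: "h \<in> carrier_mat 1 j" and obs: "observable h H"
  shows "det (observability_mat h H) \<noteq> 0"
proof
  have Ob: "observability_mat h H \<in> carrier_mat j j" using H by (simp add: observability_mat_def)
  assume "det (observability_mat h H) = 0"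
  then obtain u where u: "u \<in> carrier_vec j" "u \<noteq> 0\<^sub>v j" "observability_mat h H *\<^sub>v u = 0\<^sub>v j"
    using det_0_iff_vec_prod_zero_field[OF Ob] by blast
  have "h *\<^sub>v (H ^\<^sub>m k *\<^sub>v u) = 0\<^sub>v 1" if k: "k < j" for k
  proof -
    have "(observability_mat h H *\<^sub>v u) $ k = 0" using u(3) k by simp
    then have "((h * H ^\<^sub>m k) *\<^sub>v u) $ 0 = 0"
      using k u(1) h H by (simp add: observability_mat_def scalar_prod_def)
    then have "(h * H ^\<^sub>m k) *\<^sub>v u = 0\<^sub>v 1" using h by (intro eq_vecI) auto
    then show ?thesis using h H u(1) by (simp add: assoc_mult_mat_vec[of _ 1 j _ j])
  qed
  then show False using krylov_kernel_trivial_if_observable[OF H h obs u(1)] u(2) by blast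
qed

lemma controllable_if_observable:
  fixes H h X :: "complex mat"
  assumes H: "H \<in> carrier_mat j j" and h: "h \<in> carrier_mat 1 j" and X: "X \<in> carrier_mat j m"
    and obs: "observable h H"
  shows "controllable (mat_adjoint H) (hcat (mat_adjoint h) X)"
proof -
  define G where "G = hcat (mat_adjoint h) X"
  define K where "K = ctrb_mat (mat_adjoint H) G"
  define Q where "Q = mat_adjoint (observability_mat h H)"
  have G: "G \<in> carrier_mat j (Suc m)" using h X by (simp add: G_def hcat_def)
  have K: "K \<in> carrier_mat j (j * Suc m)" using H G by (simp add: K_def ctrb_mat_def)
  have Q: "Q \<in> carrier_mat j j" using H by (simp add: Q_def observability_mat_def)
  have "det Q \<noteq> 0"
    using H det_observability_mat_nonzero[OF H h obs]
    by (simp add: Q_def det_mat_adjoint[of _ j] observability_mat_def)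
  \<comment> \<open>column k of Q is the adjoint of the row h H^k, i.e. (H^*)^k h^*\<close>
  have col_Q: "col Q k = col K (k * Suc m)" if k: "k < j" for k
  proof -
    have "col G 0 = col (mat_adjoint h) 0"
      unfolding G_def using h by (intro col_hcat_0) simp
    then have "col K (k * Suc m) = mat_adjoint H ^\<^sub>m k *\<^sub>v col (mat_adjoint h) 0"
      unfolding K_def using col_ctrb_mat[of "mat_adjoint H" j G "Suc m" k] G H k by simp
    also have "\<dots> = col (mat_adjoint (h * H ^\<^sub>m k)) 0"
      using H h by (simp add: mat_adjoint_mult[of _ 1 j _ j] mat_adjoint_pow[of _ j] col_mult2[of _ j j _ 1])
    also have "\<dots> = col Q k"
      using H h k by (intro eq_vecI) (auto simp: Q_def observability_mat_def)
    finally show ?thesis by simp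
  qed
  have "set (cols Q) \<subseteq> set (cols K)"
  proof
    fix v assume "v \<in> set (cols Q)"
    then obtain k where k: "k < j" and v: "v = col Q k" using Q by (auto simp: cols_def)
    have "k * Suc m < j * Suc m" using k by (rule mult_less_mono1) simp
    then show "v \<in> set (cols K)" unfolding v col_Q[OF k] using K by (auto simp: cols_def)
  qed
  then have "vec_space.rank j K = j"
    using vec_space.rank_eq_if_nonsingular_cols[OF K Q \<open>det Q \<noteq> 0\<close>] by blast
  then show ?thesis using H by (simp add: controllable_def K_def G_def)
qed

lemma nodal_poly_root_iff: "poly (nodal_poly s) (x :: 'a :: idom) = 0 \<longleftrightarrow> x \<in># s"
  by (auto simp: nodal_poly_def poly_prod_mset)

theorem mainTheorem3:
  fixes A C Z h H :: "complex mat" and s :: "complex multiset" and n j :: nat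
  assumes A: "A \<in> carrier_mat n n"
    and C: "C \<in> carrier_mat 1 n"
    and s_size: "size s = j"
    and s_spec: "\<forall>x \<in># s. \<not> eigenvalue (mat_adjoint A) x"
    and K_variant: "variant (mat_adjoint A) (rat_krylov (mat_adjoint A) (col (mat_adjoint C) 0) s)"
    and Z: "Z \<in> carrier_mat n j"
    and Z_span: "{Z *\<^sub>v y | y. y \<in> carrier_vec j} = rat_krylov (mat_adjoint A) (col (mat_adjoint C) 0) s"
    and Z_indep: "\<forall>y \<in> carrier_vec j. Z *\<^sub>v y = 0\<^sub>v n \<longrightarrow> y = 0\<^sub>v j"
    and h: "h \<in> carrier_mat 1 j"
    and H: "H \<in> carrier_mat j j"
    and rel: "mat_adjoint A * Z = mat_adjoint C * h + Z * H"
    and spec_H: "char_poly H = nodal_poly s"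
  shows "(\<not> (\<exists>u \<mu>. u \<in> carrier_vec j \<and> u \<noteq> 0\<^sub>v j \<and> h *\<^sub>v u = 0\<^sub>v 1 \<and> H *\<^sub>v u = \<mu> \<cdot>\<^sub>v u))
       \<and> (\<forall>m B. B \<in> carrier_mat n m \<longrightarrow>
            controllable (mat_adjoint H) (hcat (mat_adjoint h) (mat_adjoint Z * B)))"
proof -
  have obs: "observable h H"
  proof (rule observable_of_krylov_relation[OF _ Z _ h H Z_indep rel])
    show "\<forall>\<mu>. eigenvalue H \<mu> \<longrightarrow> \<not> eigenvalue (mat_adjoint A) \<mu>"
      using eigenvalue_root_char_poly[OF H] s_spec by (simp add: spec_H nodal_poly_root_iff)
  qed (use A C in auto)
  then have "\<not> (\<exists>u \<mu>. u \<in> carrier_vec j \<and> u \<noteq> 0\<^sub>v j \<and> h *\<^sub>v u = 0\<^sub>v 1 \<and> H *\<^sub>v u = \<mu> \<cdot>\<^sub>v u)"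
    using H h unfolding observable_def by (metis carrier_matD)
  moreover have "controllable (mat_adjoint H) (hcat (mat_adjoint h) (mat_adjoint Z * B))"
    if "B \<in> carrier_mat n m" for m B
    using controllable_if_observable[OF H h _ obs] Z that by (meson mat_adjoint_carrier mult_carrier_mat)
  ultimately show ?thesis by blast
qed

end
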